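(* For $m,n\in\mathbb{N}$ (positive integers) let \[ C_m^n:=\left|\left\{(i_1,\dots,i_m)\in\{1,\dots,n\}^m:\ \forall j\in\{1,\dots,m\}\ \exists j'\in\{1,\dots,m\},\ j'\neq j,\ i_j=i_{j'}\right\}\right|. \] Then $C_m^n\leq m!\left(\frac n2\right)^{\lfloor m/2\rfloor}$. *)

theory Defs
  imports Complex_Main "HOL-Library.FuncSet"
begin

definition C :: "nat \<Rightarrow> nat \<Rightarrow> nat" where
  "C m n = card {i \<in> PiE {1..m} (\<lambda>_. {1..n}).
                   \<forall>j\<in>{1..m}. \<exists>j'\<in>{1..m}. j' \<noteq> j \<and> i j = i j'}"

end

theory Submission
  imports Defs
begin

text \<open>Let c(m) be the number of maps on m coordinates all of whose values are repeated. Peel off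
  one coordinate a: such a map is determined by the nonempty set S of other coordinates sharing the
  value of a, by that value, and by its restriction to the remaining coordinates, which again has all
  values repeated. Hence c(M + 1) is at most the sum over k \<ge> 1 of (M choose k) n c(M - k), and for
  n \<ge> 2 the bound m! (n/2)^(m div 2) propagates through this recursion because
  2 (1/1! + ... + 1/M!) \<le> M + 1. For n = 1 at most the constant map is counted.\<close>

definition repeated_maps :: "nat \<Rightarrow> 'a set \<Rightarrow> ('a \<Rightarrow> nat) set" where
  "repeated_maps n A =
     {f \<in> PiE A (\<lambda>_. {1..n}). \<forall>j\<in>A. \<exists>j'\<in>A. j' \<noteq> j \<and> f j = f j'}"

definition repeated_bound :: "nat \<Rightarrow> nat \<Rightarrow> real" where
  "repeated_bound n m = fact m * (real n / 2) ^ (m div 2)"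

lemma finite_repeated_maps: "finite A \<Longrightarrow> finite (repeated_maps n A)"
  unfolding repeated_maps_def by (rule finite_subset[of _ "PiE A (\<lambda>_. {1..n})"]) (auto intro: finite_PiE)

lemma two_power_le_fact_Suc: "(2::real) ^ M \<le> fact (Suc M)"
proof (induction M)
  case 0
  then show ?case by simp
next
  case (Suc M)
  have "(2::real) ^ Suc M \<le> 2 * fact (Suc M)" using Suc by simp
  also have "\<dots> \<le> fact (Suc (Suc M))" by simp
  finally show ?case .
qed

lemma two_power_half_le_fact: "(2::real) ^ (m div 2) \<le> fact m"
proof (cases m)
  case (Suc M)
  then have "(2::real) ^ (m div 2) \<le> 2 ^ M" by (intro power_increasing) auto
  also have "\<dots> \<le> fact m" using two_power_le_fact_Suc[of M] Suc by simp
  finally show ?thesis .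
qed simp

lemma sum_inverse_fact_le: "2 * (\<Sum>k=1..M. 1 / (fact k :: real)) \<le> real M + 1"
proof (induction M)
  case 0
  then show ?case by simp
next
  case (Suc M)
  have "2 / (fact (Suc M) :: real) \<le> 1" if "M \<noteq> 0"
  proof -
    have "(2::real) \<le> real (Suc M)" using that by simp
    also have "\<dots> \<le> fact (Suc M)"
      by (metis fact_ge_self of_nat_fact of_nat_le_iff)
    finally show ?thesis by (simp del: fact_Suc)
  qed
  with Suc show ?case by (cases "M = 0") (auto simp: algebra_simps)
qed

lemma repeated_bound_recurrence:
  assumes "n \<ge> 2"
  shows "(\<Sum>k=1..M. real (M choose k) * (real n * repeated_bound n (M - k)))
           \<le> repeated_bound n (Suc M)"
proof -
  define d where "d = Suc M div 2"
  have term_le: "real (M choose k) * (real n * repeated_bound n (M - k))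
                   \<le> 2 * (fact M / fact k) * (real n / 2) ^ d"
    if k: "k \<in> {1..M}" for k
  proof -
    have "fact k * fact (M - k) * real (M choose k) = fact M"
      using binomial_fact_lemma[of k M] k by (metis atLeastAtMost_iff of_nat_fact of_nat_mult)
    then have choose_eq: "real (M choose k) * fact (M - k) = fact M / fact k"
      by (simp add: field_simps)
    have "(M - k) div 2 + 1 \<le> d" using k unfolding d_def by auto
    moreover have "real n / 2 \<ge> 1" using assms by simp
    ultimately have "real n * (real n / 2) ^ ((M - k) div 2) \<le> 2 * (real n / 2) ^ d"
      using power_increasing[of "(M - k) div 2 + 1" d "real n / 2"] by simp
    then have "(real (M choose k) * fact (M - k)) * (real n * (real n / 2) ^ ((M - k) div 2))
                 \<le> (fact M / fact k) * (2 * (real n / 2) ^ d)"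
      unfolding choose_eq by (intro mult_left_mono) auto
    then show ?thesis unfolding repeated_bound_def by (simp add: algebra_simps)
  qed
  have "(\<Sum>k=1..M. real (M choose k) * (real n * repeated_bound n (M - k)))
        \<le> (\<Sum>k=1..M. 2 * (fact M / fact k) * (real n / 2) ^ d)"
    by (rule sum_mono) (rule term_le)
  also have "\<dots> = fact M * (real n / 2) ^ d * (2 * (\<Sum>k=1..M. 1 / (fact k :: real)))"
    by (simp add: sum_distrib_left sum_distrib_right algebra_simps)
  also have "\<dots> \<le> fact M * (real n / 2) ^ d * (real M + 1)"
    by (intro mult_left_mono sum_inverse_fact_le) auto
  also have "\<dots> = repeated_bound n (Suc M)"
    unfolding repeated_bound_def d_def by (simp add: algebra_simps)
  finally show ?thesis .
qed

lemma sum_nonempty_subsets_card: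
  fixes g :: "nat \<Rightarrow> 'b::comm_semiring_1"
  assumes "finite X"
  shows "(\<Sum>S\<in>Pow X - {{}}. g (card S)) = (\<Sum>k=1..card X. of_nat (card X choose k) * g k)"
proof -
  have "(\<Sum>S\<in>Pow X - {{}}. g (card S)) =
        (\<Sum>k=1..card X. \<Sum>S\<in>{S \<in> Pow X - {{}}. card S = k}. g (card S))"
    using assms
    by (intro sum.group[symmetric])
       (auto simp: card_mono Suc_le_eq card_gt_0_iff dest: rev_finite_subset[OF assms])
  also have "\<dots> = (\<Sum>k=1..card X. of_nat (card X choose k) * g k)"
  proof (rule sum.cong[OF refl])
    fix k assume "k \<in> {1..card X}"
    then have "{S \<in> Pow X - {{}}. card S = k} = {S. S \<subseteq> X \<and> card S = k}" by auto
    then show "(\<Sum>S\<in>{S \<in> Pow X - {{}}. card S = k}. g (card S)) = of_nat (card X choose k) * g k"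
      using n_subsets[OF assms, of k] by simp
  qed
  finally show ?thesis .
qed

definition peel_coordinate :: "'a set \<Rightarrow> 'a \<Rightarrow> ('a \<Rightarrow> nat) \<Rightarrow> 'a set \<times> nat \<times> ('a \<Rightarrow> nat)" where
  "peel_coordinate X a f =
     (let S = {j \<in> X. f j = f a} in (S, f a, restrict f (X - S)))"

lemma inj_on_peel_coordinate:
  assumes "a \<in> A"
  shows "inj_on (peel_coordinate (A - {a}) a) (repeated_maps n A)"
proof (rule inj_onI)
  fix f g assume f: "f \<in> repeated_maps n A" and g: "g \<in> repeated_maps n A"
    and peel_eq: "peel_coordinate (A - {a}) a f = peel_coordinate (A - {a}) a g"
  define S where "S = {j \<in> A - {a}. f j = f a}"
  have parts: "S = {j \<in> A - {a}. g j = g a} \<and> f a = g a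
          \<and> restrict f (A - {a} - S) = restrict g (A - {a} - {j \<in> A - {a}. g j = g a})"
    using peel_eq unfolding peel_coordinate_def S_def Let_def prod.inject .
  then have S_eq: "S = {j \<in> A - {a}. g j = g a}" and fa: "f a = g a" by simp_all
  have rest: "restrict f (A - {a} - S) = restrict g (A - {a} - S)"
    using parts S_eq by simp
  show "f = g"
  proof (rule extensionalityI)
    show "f \<in> extensional A" "g \<in> extensional A"
      using f g unfolding repeated_maps_def by (auto simp: PiE_def)
    fix x assume "x \<in> A"
    then consider "x = a" | "x \<in> S" | "x \<in> A - {a} - S" by blast
    then show "f x = g x"
    proof cases
      case 2
      then have "f x = f a" and "g x = g a"
        using S_eq unfolding S_def by blast+
      then show ?thesis using fa by simp
    next
      case 3
      then show ?thesis using fun_cong[OF rest, of x] by simp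
    qed (use fa in simp)
  qed
qed

lemma peel_coordinate_in_SIGMA:
  assumes "a \<in> A" and f: "f \<in> repeated_maps n A"
  shows "peel_coordinate (A - {a}) a f
           \<in> (SIGMA S:Pow (A - {a}) - {{}}. {1..n} \<times> repeated_maps n (A - {a} - S))"
proof -
  define S where "S = {j \<in> A - {a}. f j = f a}"
  have f_Pi: "f \<in> PiE A (\<lambda>_. {1..n})" and repeated: "\<forall>j\<in>A. \<exists>j'\<in>A. j' \<noteq> j \<and> f j = f j'"
    using f unfolding repeated_maps_def by auto
  obtain i where "i \<in> A" "i \<noteq> a" "f a = f i" using repeated \<open>a \<in> A\<close> by blast
  then have "S \<noteq> {}" unfolding S_def by auto
  moreover have "S \<subseteq> A - {a}" unfolding S_def by blast
  moreover have "f a \<in> {1..n}" using f_Pi \<open>a \<in> A\<close> by auto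
  moreover have "restrict f (A - {a} - S) \<in> repeated_maps n (A - {a} - S)"
    unfolding repeated_maps_def
  proof (intro CollectI conjI ballI)
    show "restrict f (A - {a} - S) \<in> PiE (A - {a} - S) (\<lambda>_. {1..n})"
      using f_Pi by auto
    fix j assume j: "j \<in> A - {a} - S"
    then obtain j' where "j' \<in> A" "j' \<noteq> j" "f j = f j'" using repeated by blast
    moreover from j have "f j \<noteq> f a" unfolding S_def by auto
    ultimately have "j' \<in> A - {a} - S" "j' \<noteq> j" "f j = f j'" unfolding S_def by auto
    with j show "\<exists>j'\<in>A - {a} - S. j' \<noteq> j \<and> restrict f (A - {a} - S) j = restrict f (A - {a} - S) j'"
      by auto
  qed
  ultimately show ?thesis
    unfolding peel_coordinate_def Let_def S_def[symmetric] by blast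
qed

lemma card_repeated_maps_le_sum:
  assumes "finite A" and "a \<in> A"
  shows "card (repeated_maps n A)
           \<le> (\<Sum>S\<in>Pow (A - {a}) - {{}}. n * card (repeated_maps n (A - {a} - S)))"
proof -
  let ?T = "SIGMA S:Pow (A - {a}) - {{}}. {1..n} \<times> repeated_maps n (A - {a} - S)"
  have "finite ?T" using assms(1) by (intro finite_SigmaI) (auto intro: finite_repeated_maps)
  moreover have "peel_coordinate (A - {a}) a ` repeated_maps n A \<subseteq> ?T"
    using peel_coordinate_in_SIGMA[OF assms(2)] by blast
  ultimately have "card (repeated_maps n A) \<le> card ?T"
    by (intro card_inj_on_le[OF inj_on_peel_coordinate[OF assms(2)]])
  also have "\<dots> = (\<Sum>S\<in>Pow (A - {a}) - {{}}. n * card (repeated_maps n (A - {a} - S)))"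
    using assms(1) by (subst card_SigmaI) (auto simp: card_cartesian_product finite_repeated_maps)
  finally show ?thesis .
qed

lemma card_repeated_maps_le:
  assumes "n \<ge> 2" and "finite A"
  shows "real (card (repeated_maps n A)) \<le> repeated_bound n (card A)"
  using assms(2)
proof (induction "card A" arbitrary: A rule: less_induct)
  case less
  show ?case
  proof (cases "A = {}")
    case True
    then show ?thesis by (simp add: repeated_maps_def repeated_bound_def)
  next
    case False
    then obtain a where a: "a \<in> A" by blast
    define X where "X = A - {a}"
    have "finite X" using less.prems unfolding X_def by simp
    have card_A: "card A = Suc (card X)"
      unfolding X_def by (rule card_Suc_Diff1[OF less.prems a, symmetric])
    have IH: "real (card (repeated_maps n (X - S))) \<le> repeated_bound n (card X - card S)"
      if "S \<in> Pow X - {{}}" for S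
    proof -
      have "card (X - S) = card X - card S"
        using that \<open>finite X\<close> by (auto intro: card_Diff_subset finite_subset)
      then show ?thesis using less.hyps[of "X - S"] \<open>finite X\<close> card_A by simp
    qed
    have "card (repeated_maps n A) \<le> (\<Sum>S\<in>Pow X - {{}}. n * card (repeated_maps n (X - S)))"
      using card_repeated_maps_le_sum[OF less.prems a] unfolding X_def .
    then have "real (card (repeated_maps n A))
                 \<le> real (\<Sum>S\<in>Pow X - {{}}. n * card (repeated_maps n (X - S)))"
      by (simp only: of_nat_le_iff)
    also have "\<dots> = (\<Sum>S\<in>Pow X - {{}}. real n * real (card (repeated_maps n (X - S))))"
      by simp
    also have "\<dots> \<le> (\<Sum>S\<in>Pow X - {{}}. real n * repeated_bound n (card X - card S))"
      by (intro sum_mono mult_left_mono IH) auto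
    also have "\<dots> = (\<Sum>k=1..card X. real (card X choose k) * (real n * repeated_bound n (card X - k)))"
      by (rule sum_nonempty_subsets_card[OF \<open>finite X\<close>])
    also have "\<dots> \<le> repeated_bound n (card A)"
      unfolding card_A by (rule repeated_bound_recurrence[OF assms(1)])
    finally show ?thesis .
  qed
qed

theorem lemma5p5:
  fixes m n :: nat
  assumes "m \<ge> 1" and "n \<ge> 1"
  shows "real (C m n) \<le> fact m * (real n / 2) ^ (m div 2)"
proof -
  have C_eq: "C m n = card (repeated_maps n {1..m})"
    unfolding C_def repeated_maps_def by simp
  show ?thesis
  proof (cases "n \<ge> 2")
    case True
    then show ?thesis
      using card_repeated_maps_le[OF True, of "{1..m}"] unfolding C_eq repeated_bound_def by simp
  next
    case False
    with assms(2) have "n = 1" by simp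
    have "C m n \<le> card (PiE {1..m} (\<lambda>_. {1..n}))"
      unfolding C_eq repeated_maps_def by (intro card_mono) (auto intro: finite_PiE)
    also have "\<dots> = 1" using \<open>n = 1\<close> by (simp add: card_PiE)
    finally have "real (C m n) \<le> 1" by simp
    also have "\<dots> \<le> fact m * (1 / 2) ^ (m div 2)"
      using two_power_half_le_fact[of m] by (simp add: power_divide field_simps)
    finally show ?thesis using \<open>n = 1\<close> by simp
  qed
qed

end
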